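(* Let $w, v \in \mathfrak{S}_n$ with $v \prec w$ in the Bruhat order, $\textsf{supp}(v) \subsetneq \textsf{supp}(w)$, and $B(w) \cong \mathbf{2} \times B(v)$, where $\mathbf{2}$ is the two-element chain, and let $i$ be the unique element of $\textsf{supp}(w) \setminus \textsf{supp}(v)$. Then $i$ is unconfined in every reduced word of $w$.
   Context: $\sigma_i$ ($1\le i\le n-1$) is the simple transposition swapping $i$ and $i+1$; products are compositions of maps. A reduced word of $w$ is a word $i_1\cdots i_\ell$ of minimal length with $w=\sigma_{i_1}\cdots\sigma_{i_\ell}$. $\textsf{supp}(w)$ is the set of letters appearing in (any) reduced word of $w$. Bruhat order: $u \preceq w$ iff some reduced word of $u$ is a subword of some reduced word of $w$; $B(w)=\{u: u\preceq w\}$. Given a reduced word $s$ in which the letter $i$ appears exactly once, $i$ is unconfined in $s$ if that occurrence is not between two occurrences of $i+1$ and not between two occurrences of $i-1$ in $s$. *)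

theory Defs
  imports "HOL-Combinatorics.Permutations" "HOL-Library.Sublist"
begin

definition sigma :: "nat \<Rightarrow> (nat \<Rightarrow> nat)" where
  "sigma i = Transposition.transpose i (Suc i)"

definition word_perm :: "nat list \<Rightarrow> (nat \<Rightarrow> nat)" where
  "word_perm s = foldr (\<lambda>i f. sigma i \<circ> f) s id"

definition is_word :: "nat \<Rightarrow> nat list \<Rightarrow> bool" where
  "is_word n s \<longleftrightarrow> set s \<subseteq> {1..<n}"

definition reduced_word :: "nat \<Rightarrow> (nat \<Rightarrow> nat) \<Rightarrow> nat list \<Rightarrow> bool" where
  "reduced_word n w s \<longleftrightarrow> is_word n s \<and> word_perm s = w \<and>
     (\<forall>t. is_word n t \<and> word_perm t = w \<longrightarrow> length s \<le> length t)"

definition supp :: "nat \<Rightarrow> (nat \<Rightarrow> nat) \<Rightarrow> nat set" where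
  "supp n w = {i. \<exists>s. reduced_word n w s \<and> i \<in> set s}"

definition bruhat_le :: "nat \<Rightarrow> (nat \<Rightarrow> nat) \<Rightarrow> (nat \<Rightarrow> nat) \<Rightarrow> bool" where
  "bruhat_le n u w \<longleftrightarrow> (\<exists>su sw. reduced_word n u su \<and> reduced_word n w sw \<and> subseq su sw)"

definition bruhat_ideal :: "nat \<Rightarrow> (nat \<Rightarrow> nat) \<Rightarrow> (nat \<Rightarrow> nat) set" where
  "bruhat_ideal n w = {u. u permutes {1..n} \<and> bruhat_le n u w}"

text \<open>B(w) is isomorphic (as a poset under Bruhat order) to the product 2 x B(v),
  where 2 = (bool, False < True) is the two-element chain and the product carries
  the componentwise order.\<close>
definition iso_two_times :: "nat \<Rightarrow> (nat \<Rightarrow> nat) \<Rightarrow> (nat \<Rightarrow> nat) \<Rightarrow> bool" where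
  "iso_two_times n w v \<longleftrightarrow>
     (\<exists>f :: (nat \<Rightarrow> nat) \<Rightarrow> bool \<times> (nat \<Rightarrow> nat).
        bij_betw f (bruhat_ideal n w) (UNIV \<times> bruhat_ideal n v) \<and>
        (\<forall>x\<in>bruhat_ideal n w. \<forall>y\<in>bruhat_ideal n w.
           bruhat_le n x y \<longleftrightarrow> (fst (f x) \<le> fst (f y) \<and> bruhat_le n (snd (f x)) (snd (f y)))))"

definition unconfined :: "nat \<Rightarrow> nat list \<Rightarrow> bool" where
  "unconfined i s \<longleftrightarrow> count_list s i = 1 \<and>
     (\<forall>p a b. p < length s \<and> s ! p = i \<and> a < p \<and> p < b \<and> b < length s \<longrightarrow>
        \<not> (s ! a = i + 1 \<and> s ! b = i + 1) \<and>
        \<not> (i \<ge> 1 \<and> s ! a = i - 1 \<and> s ! b = i - 1))"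

end

(*
  Suppose i is confined in a reduced word s of w.  Either i occurs twice, and then some letter j
  adjacent to i lies between two consecutive occurrences (otherwise the two copies of s_i commute
  together and cancel, contradicting reducedness), or its only occurrence lies between two
  occurrences of such a j.  Either way s has a subword i j i or j i j, so t = s_i s_j s_i \<le> w
  by the subword property.

  An isomorphism f : B(w) \<cong> 2 \<times> B(v) singles out an atom s_k such that the upper copy of B(v)
  consists of the elements above s_k.  Pushing the upper part of B(t) injectively into the lower
  part, and counting four elements of B(t) above s_i (or s_j) against two not above it, shows that
  t lies in the lower copy.  Hence k \<noteq> i, so k \<in> supp(v) and v lies in the upper copy, say
  f(v) = (1, y).  The lower copy is an ideal B(v') \<cong> B(v) \<cong> 2 \<times> B(y) \<cong> 2 \<times> B(u), where u
  corresponds to y, and (v', u) satisfies all hypotheses of (w, v) with t \<le> v' and a strictly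
  smaller ideal, which is impossible.
*)

theory Submission
  imports Defs
begin

section \<open>Reduced words and inversions\<close>

lemma word_perm_Nil [simp]: "word_perm [] = id"
  by (simp add: word_perm_def)

lemma word_perm_Cons [simp]: "word_perm (k # s) = sigma k \<circ> word_perm s"
  by (simp add: word_perm_def)

lemma word_perm_append [simp]: "word_perm (s @ t) = word_perm s \<circ> word_perm t"
  by (induction s) auto

lemma sigma_apply: "sigma k x = (if x = k then Suc k else if x = Suc k then k else x)"
  by (simp add: sigma_def Transposition.transpose_def)

lemma sigma_sigma [simp]: "sigma k (sigma k x) = x"
  by (simp add: sigma_apply)

lemma sigma_comp_sigma [simp]: "sigma k \<circ> sigma k = id"
  by (simp add: fun_eq_iff)

lemma sigma_permutes: "k \<in> {1..<n} \<Longrightarrow> sigma k permutes {1..n}"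
  unfolding sigma_def by (rule permutes_swap_id) auto

lemma sigma_commute: "Suc i < m \<or> Suc m < i \<Longrightarrow> sigma i \<circ> sigma m = sigma m \<circ> sigma i"
  by (auto simp: fun_eq_iff sigma_apply)

lemma sigma_commute_word_perm:
  "\<forall>m\<in>set b. Suc i < m \<or> Suc m < i \<Longrightarrow> sigma i \<circ> word_perm b = word_perm b \<circ> sigma i"
proof (induction b)
  case (Cons m b)
  have "sigma i \<circ> word_perm (m # b) = (sigma i \<circ> sigma m) \<circ> word_perm b"
    by (simp add: comp_assoc)
  also have "\<dots> = sigma m \<circ> (sigma i \<circ> word_perm b)"
    using Cons.prems sigma_commute[of i m] by (simp add: comp_assoc)
  also have "\<dots> = sigma m \<circ> (word_perm b \<circ> sigma i)"
    using Cons by (metis list.set_intros(2))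
  also have "\<dots> = word_perm (m # b) \<circ> sigma i"
    by (simp add: comp_assoc)
  finally show ?case .
qed simp

lemma is_word_Nil [simp]: "is_word n []"
  and is_word_Cons [simp]: "is_word n (k # s) \<longleftrightarrow> k \<in> {1..<n} \<and> is_word n s"
  and is_word_append [simp]: "is_word n (s @ t) \<longleftrightarrow> is_word n s \<and> is_word n t"
  by (auto simp: is_word_def)

lemma word_perm_permutes: "is_word n s \<Longrightarrow> word_perm s permutes {1..n}"
proof (induction s)
  case (Cons k s)
  then show ?case
    using permutes_compose[OF _ sigma_permutes] by (simp only: is_word_Cons word_perm_Cons)
qed (simp add: permutes_id)

lemma sigma_le_iff: "k \<noteq> m \<Longrightarrow> sigma k a \<le> m \<longleftrightarrow> a \<le> m"
  by (auto simp: sigma_apply)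

lemma word_perm_le_iff: "m \<notin> set s \<Longrightarrow> word_perm s a \<le> m \<longleftrightarrow> a \<le> m"
  by (induction s) (auto simp: sigma_le_iff)

lemma letter_mem_word: "word_perm s = sigma m \<Longrightarrow> m \<in> set s"
  using word_perm_le_iff[of m s m] by (auto simp: sigma_apply)

definition inversions :: "nat \<Rightarrow> (nat \<Rightarrow> nat) \<Rightarrow> (nat \<times> nat) set" where
  "inversions n x = {(a, b). a \<in> {1..n} \<and> b \<in> {1..n} \<and> a < b \<and> x b < x a}"

definition perm_length :: "nat \<Rightarrow> (nat \<Rightarrow> nat) \<Rightarrow> nat" where
  "perm_length n x = card (inversions n x)"

lemma finite_inversions [simp]: "finite (inversions n x)"
  by (rule finite_subset[of _ "{1..n} \<times> {1..n}"]) (auto simp: inversions_def)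

lemma perm_length_id [simp]: "perm_length n id = 0"
proof -
  have "inversions n id = {}"
    by (auto simp: inversions_def)
  then show ?thesis
    by (simp add: perm_length_def)
qed

lemma inversions_comp_sigma_subset:
  assumes "k \<in> {1..<n}"
  shows "map_prod (sigma k) (sigma k) ` (inversions n x - {(k, Suc k)})
    \<subseteq> inversions n (x \<circ> sigma k) - {(k, Suc k)}"
  using assms by (auto simp: inversions_def sigma_apply split: if_splits)

lemma perm_length_ascent:
  assumes k: "k \<in> {1..<n}" and asc: "x k < x (Suc k)"
  shows "perm_length n (x \<circ> sigma k) = Suc (perm_length n x)"
proof -
  let ?e = "(k, Suc k)" and ?sw = "map_prod (sigma k) (sigma k)"
  have "bij_betw ?sw (inversions n x - {?e}) (inversions n (x \<circ> sigma k) - {?e})"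
  proof (rule bij_betw_byWitness[where f' = ?sw])
    show "?sw ` (inversions n (x \<circ> sigma k) - {?e}) \<subseteq> inversions n x - {?e}"
      using inversions_comp_sigma_subset[OF k, of "x \<circ> sigma k"] by (simp add: comp_assoc)
  qed (use inversions_comp_sigma_subset[OF k] in auto)
  then have "card (inversions n (x \<circ> sigma k) - {?e}) = card (inversions n x - {?e})"
    by (simp add: bij_betw_same_card)
  moreover have "?e \<in> inversions n (x \<circ> sigma k)" "?e \<notin> inversions n x"
    using k asc by (auto simp: inversions_def sigma_apply)
  ultimately show ?thesis
    by (metis perm_length_def card_Suc_Diff1 finite_inversions Diff_empty Diff_insert0)
qed

lemma perm_length_descent:
  assumes "k \<in> {1..<n}" and "x (Suc k) < x k"
  shows "Suc (perm_length n (x \<circ> sigma k)) = perm_length n x"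
  using perm_length_ascent[of k n "x \<circ> sigma k"] assms by (simp add: comp_assoc sigma_apply)

lemma perm_length_word_le: "is_word n s \<Longrightarrow> perm_length n (word_perm s) \<le> length s"
proof (induction s rule: rev_induct)
  case (snoc k s)
  then have k: "k \<in> {1..<n}" and "is_word n s" by auto
  then have "word_perm s k \<noteq> word_perm s (Suc k)"
    by (metis word_perm_permutes permutes_inj injD n_not_Suc_n)
  then consider "word_perm s k < word_perm s (Suc k)" | "word_perm s (Suc k) < word_perm s k"
    by linarith
  then have "perm_length n (word_perm s \<circ> sigma k) \<le> Suc (perm_length n (word_perm s))"
    using perm_length_ascent[OF k, of "word_perm s"] perm_length_descent[OF k, of "word_perm s"]
    by cases auto
  with snoc.IH \<open>is_word n s\<close> show ?case
    by (simp del: o_apply)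
qed simp

lemma descent_exists:
  assumes p: "p permutes {1..n}" and "p \<noteq> id"
  shows "\<exists>k\<in>{1..<n}. p (Suc k) < p k"
proof (rule ccontr)
  assume "\<not> ?thesis"
  then have asc: "p k < p (Suc k)" if "k \<in> {1..<n}" for k
    using that permutes_inj[OF p] by (metis injD linorder_neqE_nat n_not_Suc_n)
  have "a \<le> p a" if "a \<in> {1..n}" for a
    using that
  proof (induction a)
    case (Suc a)
    then show ?case
      using asc[of a] permutes_in_image[OF p, of "Suc a"] by (cases "a = 0") auto
  qed simp
  then show False
    using permutes_natset_ge[OF p] \<open>p \<noteq> id\<close> by blast
qed

lemma word_of_perm_length:
  "p permutes {1..n} \<Longrightarrow> \<exists>s. is_word n s \<and> word_perm s = p \<and> length s = perm_length n p"
proof (induction "perm_length n p" arbitrary: p)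
  case 0
  then have "inversions n p = {}"
    by (simp add: perm_length_def)
  then have "p = id"
    using descent_exists[OF 0(2)] by (fastforce simp: inversions_def)
  then show ?case
    using 0(1) by (intro exI[of _ "[]"]) simp
next
  case (Suc m)
  then have "p \<noteq> id" by (metis perm_length_id Zero_neq_Suc)
  then obtain k where k: "k \<in> {1..<n}" "p (Suc k) < p k"
    using descent_exists Suc.prems by blast
  then have len: "Suc (perm_length n (p \<circ> sigma k)) = perm_length n p"
    by (rule perm_length_descent)
  moreover have "p \<circ> sigma k permutes {1..n}"
    using Suc.prems k sigma_permutes permutes_compose by blast
  ultimately obtain s where s: "is_word n s" "word_perm s = p \<circ> sigma k"
      "length s = perm_length n (p \<circ> sigma k)"
    using Suc by (metis Suc_inject)
  have "word_perm (s @ [k]) = p"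
    using s(2) by (simp add: comp_assoc)
  moreover have "length (s @ [k]) = perm_length n p"
    using s(3) len by simp
  moreover have "is_word n (s @ [k])"
    using s(1) k by simp
  ultimately show ?case
    by blast
qed

lemma reduced_word_iff:
  "reduced_word n w s \<longleftrightarrow> is_word n s \<and> word_perm s = w \<and> length s = perm_length n w"
proof
  assume red: "reduced_word n w s"
  then have "w permutes {1..n}"
    using word_perm_permutes by (auto simp: reduced_word_def)
  then obtain t where "is_word n t" "word_perm t = w" "length t = perm_length n w"
    using word_of_perm_length by blast
  with red have "length s \<le> perm_length n w"
    unfolding reduced_word_def by metis
  with red perm_length_word_le[of n s]
  show "is_word n s \<and> word_perm s = w \<and> length s = perm_length n w"
    by (auto simp: reduced_word_def)
next
  assume s: "is_word n s \<and> word_perm s = w \<and> length s = perm_length n w"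
  have "length s \<le> length t" if "is_word n t" "word_perm t = w" for t
    using s perm_length_word_le[OF that(1)] that(2) by simp
  with s show "reduced_word n w s"
    by (simp add: reduced_word_def)
qed

lemma reduced_word_is_word: "reduced_word n x s \<Longrightarrow> is_word n s"
  and reduced_word_word_perm: "reduced_word n x s \<Longrightarrow> word_perm s = x"
  and reduced_word_length: "reduced_word n x s \<Longrightarrow> length s = perm_length n x"
  by (simp_all add: reduced_word_iff)

lemma reduced_word_permutes: "reduced_word n x s \<Longrightarrow> x permutes {1..n}"
  using reduced_word_is_word reduced_word_word_perm word_perm_permutes by blast

lemma reduced_word_exists: "x permutes {1..n} \<Longrightarrow> \<exists>s. reduced_word n x s"
  using word_of_perm_length reduced_word_iff by blast

lemma reduced_word_Nil: "reduced_word n id []"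
  by (simp add: reduced_word_iff)

lemma reduced_word_snocI:
  assumes "reduced_word n x s" "k \<in> {1..<n}" "x k < x (Suc k)"
  shows "reduced_word n (x \<circ> sigma k) (s @ [k])"
  using assms perm_length_ascent[OF assms(2,3)] by (simp add: reduced_word_iff)

lemma reduced_word_snocD:
  assumes red: "reduced_word n w (s @ [k])"
  shows "reduced_word n (word_perm s) s" "k \<in> {1..<n}"
    "word_perm s k < word_perm s (Suc k)" "w = word_perm s \<circ> sigma k"
proof -
  have s: "is_word n s" and k: "k \<in> {1..<n}" and w: "w = word_perm s \<circ> sigma k"
    and len: "Suc (length s) = perm_length n w"
    using red by (simp_all add: reduced_word_iff)
  then show "k \<in> {1..<n}" "w = word_perm s \<circ> sigma k"
    by simp_all
  show asc: "word_perm s k < word_perm s (Suc k)"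
  proof (rule ccontr)
    assume "\<not> ?thesis"
    then have "word_perm s (Suc k) < word_perm s k"
      using word_perm_permutes[OF s] by (metis permutes_inj injD n_not_Suc_n linorder_neqE_nat)
    then show False
      using perm_length_descent[OF k, of "word_perm s"] perm_length_word_le[OF s] w len by simp
  qed
  show "reduced_word n (word_perm s) s"
    using perm_length_ascent[OF k asc] s w len by (simp add: reduced_word_iff)
qed

lemma reduced_word_sigma: "k \<in> {1..<n} \<Longrightarrow> reduced_word n (sigma k) [k]"
  using reduced_word_snocI[OF reduced_word_Nil, of k n] by simp

section \<open>Bruhat order via the tableau criterion\<close>

text \<open>By the tableau criterion, the Bruhat order is the entrywise order on these counts.\<close>
fun rank_matrix :: "(nat \<Rightarrow> nat) \<Rightarrow> nat \<Rightarrow> nat \<Rightarrow> nat" where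
  "rank_matrix x 0 q = 0"
| "rank_matrix x (Suc p) q = rank_matrix x p q + (if q \<le> x (Suc p) then 1 else 0)"

definition rank_le :: "(nat \<Rightarrow> nat) \<Rightarrow> (nat \<Rightarrow> nat) \<Rightarrow> bool" where
  "rank_le u w \<longleftrightarrow> (\<forall>p q. rank_matrix u p q \<le> rank_matrix w p q)"

lemma rank_le_refl: "rank_le u u"
  by (simp add: rank_le_def)

lemma rank_le_trans: "rank_le u v \<Longrightarrow> rank_le v w \<Longrightarrow> rank_le u w"
  unfolding rank_le_def by (meson le_trans)

lemma rank_matrix_comp_sigma:
  assumes "1 \<le> k"
  shows "rank_matrix (x \<circ> sigma k) p q =
    (if p = k then rank_matrix x (k - 1) q + (if q \<le> x (Suc k) then 1 else 0)
     else rank_matrix x p q)"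
proof (induction p)
  case (Suc p)
  obtain K where K: "k = Suc K"
    using assms by (cases k) auto
  consider "Suc p < k" | "Suc p = k" | "Suc p = Suc k" | "Suc p > Suc k"
    by linarith
  then show ?case
    using Suc K by cases (auto simp: sigma_apply)
qed (use assms in simp)

lemma rank_le_comp_sigma_ascent:
  assumes "1 \<le> k" "x k < x (Suc k)"
  shows "rank_le x (x \<circ> sigma k)"
  using assms by (cases k) (auto simp: rank_le_def rank_matrix_comp_sigma)

lemma rank_le_comp_sigma:
  assumes k: "1 \<le> k" and le: "rank_le u w"
    and "w k < w (Suc k) \<or> u (Suc k) < u k \<and> w (Suc k) < w k"
  shows "rank_le (u \<circ> sigma k) (w \<circ> sigma k)"
  unfolding rank_le_def
proof (intro allI)
  fix p q
  obtain K where K: "k = Suc K"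
    using k by (cases k) auto
  have "rank_matrix u p q \<le> rank_matrix w p q" "rank_matrix u K q \<le> rank_matrix w K q"
    "rank_matrix u (Suc k) q \<le> rank_matrix w (Suc k) q"
    using le unfolding rank_le_def by blast+
  then show "rank_matrix (u \<circ> sigma k) p q \<le> rank_matrix (w \<circ> sigma k) p q"
    using assms(3) k by (auto simp: rank_matrix_comp_sigma K split: if_splits)
qed

lemma rank_le_comp_sigma_right:
  assumes k: "1 \<le> k" and le: "rank_le u w" and "u k < u (Suc k)" "w (Suc k) < w k"
  shows "rank_le u (w \<circ> sigma k)"
  unfolding rank_le_def
proof (intro allI)
  fix p q
  obtain K where K: "k = Suc K"
    using k by (cases k) auto
  have "rank_matrix u p q \<le> rank_matrix w p q" "rank_matrix u K q \<le> rank_matrix w K q"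
    "rank_matrix u (Suc k) q \<le> rank_matrix w (Suc k) q"
    using le unfolding rank_le_def by blast+
  then show "rank_matrix u p q \<le> rank_matrix (w \<circ> sigma k) p q"
    using assms(3,4) k by (auto simp: rank_matrix_comp_sigma K split: if_splits)
qed

lemma rank_matrix_id: "p < q \<Longrightarrow> rank_matrix id p q = 0"
  by (induction p) auto

lemma rank_matrix_eq_0D: "rank_matrix x p q = 0 \<Longrightarrow> a \<in> {1..p} \<Longrightarrow> x a < q"
proof (induction p)
  case (Suc p)
  then show ?case
    by (cases "a = Suc p") (auto split: if_split_asm)
qed simp

lemma rank_le_id:
  assumes u: "u permutes {1..n}" and le: "rank_le u id"
  shows "u = id"
proof (rule permutes_natset_le[OF u], intro ballI)
  fix c :: nat
  assume "c \<in> {1..n}"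
  have "rank_matrix u c (Suc c) = 0"
    using le rank_matrix_id[of c "Suc c"] unfolding rank_le_def by (metis le_zero_eq lessI)
  then show "u c \<le> c"
    using rank_matrix_eq_0D[of u c "Suc c" c] \<open>c \<in> {1..n}\<close> by simp
qed

lemma set_mono_subseq: "subseq xs ys \<Longrightarrow> set xs \<subseteq> set ys"
  by (induction rule: list_emb.induct) auto

lemma subseq_singleton_right: "subseq r [k] \<Longrightarrow> r = [] \<or> r = [k]"
  by (cases r) (auto split: if_split_asm)

lemma rank_le_of_subseq:
  "reduced_word n w s \<Longrightarrow> subseq r s \<Longrightarrow> rank_le (word_perm r) w"
proof (induction s arbitrary: r w rule: rev_induct)
  case Nil
  then have "r = []" "w = id"
    using reduced_word_word_perm[OF Nil(1)] by (auto dest: list_emb_Nil2)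
  then show ?case
    by (simp add: rank_le_refl)
next
  case (snoc k s)
  note s = reduced_word_snocD[OF snoc.prems(1)]
  obtain r1 r2 where r: "r = r1 @ r2" "subseq r1 s" "subseq r2 [k]"
    using snoc.prems(2) by (rule subseq_appendE)
  have IH: "rank_le (word_perm r1) (word_perm s)"
    using snoc.IH[OF s(1) r(2)] .
  have k: "1 \<le> k"
    using s(2) by simp
  from subseq_singleton_right[OF r(3)] show ?case
  proof
    assume "r2 = []"
    then have "word_perm r = word_perm r1"
      using r(1) by simp
    moreover have "rank_le (word_perm r1) (word_perm s \<circ> sigma k)"
      using rank_le_trans[OF IH rank_le_comp_sigma_ascent[OF k s(3)]] .
    ultimately show ?thesis
      unfolding s(4) by (simp only:)
  next
    assume "r2 = [k]"
    then have "word_perm r = word_perm r1 \<circ> sigma k"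
      using r(1) by simp
    moreover have "rank_le (word_perm r1 \<circ> sigma k) (word_perm s \<circ> sigma k)"
      using rank_le_comp_sigma[OF k IH] s(3) by blast
    ultimately show ?thesis
      unfolding s(4) by (simp only:)
  qed
qed

lemma subseq_of_rank_le:
  "reduced_word n w s \<Longrightarrow> u permutes {1..n} \<Longrightarrow> rank_le u w \<Longrightarrow> \<exists>r. reduced_word n u r \<and> subseq r s"
proof (induction s arbitrary: u w rule: rev_induct)
  case Nil
  have "w = id"
    using reduced_word_word_perm[OF Nil(1)] by simp
  have "rank_le u id"
    using Nil(3) unfolding \<open>w = id\<close> .
  then have "u = id"
    by (rule rank_le_id[OF Nil(2)])
  then show ?case
    using reduced_word_Nil by blast
next
  case (snoc k s)
  note s = reduced_word_snocD[OF snoc.prems(1)]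
  have k: "1 \<le> k"
    using s(2) by simp
  have w_desc: "w (Suc k) < w k" and w_s: "w \<circ> sigma k = word_perm s"
    using s(3,4) by (auto simp: sigma_apply comp_assoc)
  have "u k \<noteq> u (Suc k)"
    using permutes_inj[OF snoc.prems(2)] by (metis injD n_not_Suc_n)
  then consider "u (Suc k) < u k" | "u k < u (Suc k)"
    by linarith
  then show ?case
  proof cases
    case 1
    have "rank_le (u \<circ> sigma k) (word_perm s)"
      using rank_le_comp_sigma[OF k snoc.prems(3)] 1 w_desc w_s by simp
    moreover have "u \<circ> sigma k permutes {1..n}"
      using permutes_compose[OF sigma_permutes[OF s(2)] snoc.prems(2)] .
    ultimately obtain r where r: "reduced_word n (u \<circ> sigma k) r" "subseq r s"
      using snoc.IH[OF s(1)] by blast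
    have "(u \<circ> sigma k) k < (u \<circ> sigma k) (Suc k)"
      using 1 by (simp add: sigma_apply)
    then have "reduced_word n u (r @ [k])"
      using reduced_word_snocI[OF r(1) s(2)] by (simp add: comp_assoc)
    moreover have "subseq (r @ [k]) (s @ [k])"
      using list_emb_append_mono[OF r(2) subseq_order.order_refl] .
    ultimately show ?thesis
      by blast
  next
    case 2
    have "rank_le u (word_perm s)"
      using rank_le_comp_sigma_right[OF k snoc.prems(3) 2 w_desc] w_s by simp
    then obtain r where "reduced_word n u r" "subseq r s"
      using snoc.IH[OF s(1) snoc.prems(2)] by blast
    then show ?thesis
      by (metis subseq_rev_drop_many)
  qed
qed

lemma bruhat_le_iff_rank_le:
  "bruhat_le n u w \<longleftrightarrow> u permutes {1..n} \<and> w permutes {1..n} \<and> rank_le u w"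
proof
  assume "bruhat_le n u w"
  then obtain su sw where su: "reduced_word n u su" and sw: "reduced_word n w sw"
    and "subseq su sw"
    by (auto simp: bruhat_le_def)
  have "rank_le (word_perm su) w"
    using sw \<open>subseq su sw\<close> by (rule rank_le_of_subseq)
  then show "u permutes {1..n} \<and> w permutes {1..n} \<and> rank_le u w"
    using reduced_word_permutes[OF su] reduced_word_permutes[OF sw]
    unfolding reduced_word_word_perm[OF su] by blast
next
  assume u: "u permutes {1..n} \<and> w permutes {1..n} \<and> rank_le u w"
  then obtain sw where sw: "reduced_word n w sw"
    using reduced_word_exists by blast
  then show "bruhat_le n u w"
    using subseq_of_rank_le[OF sw] u unfolding bruhat_le_def by blast
qed

lemma bruhat_le_subseq:
  "bruhat_le n u w \<Longrightarrow> reduced_word n w s \<Longrightarrow> \<exists>r. reduced_word n u r \<and> subseq r s"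
  using subseq_of_rank_le bruhat_le_iff_rank_le by blast

lemma bruhat_le_trans: "bruhat_le n u v \<Longrightarrow> bruhat_le n v w \<Longrightarrow> bruhat_le n u w"
  unfolding bruhat_le_iff_rank_le using rank_le_trans by blast

lemma bruhat_le_refl: "x permutes {1..n} \<Longrightarrow> bruhat_le n x x"
  by (simp add: bruhat_le_iff_rank_le rank_le_refl)

lemma bruhat_le_permutes_lower: "bruhat_le n u w \<Longrightarrow> u permutes {1..n}"
  and bruhat_le_permutes_upper: "bruhat_le n u w \<Longrightarrow> w permutes {1..n}"
  by (simp_all add: bruhat_le_iff_rank_le)

lemma id_bruhat_le: "x permutes {1..n} \<Longrightarrow> bruhat_le n id x"
  using reduced_word_exists reduced_word_Nil unfolding bruhat_le_def by blast

lemma bruhat_le_antisym: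
  assumes "bruhat_le n x y" "bruhat_le n y x"
  shows "x = y"
proof -
  obtain sy where sy: "reduced_word n y sy"
    using reduced_word_exists bruhat_le_permutes_lower assms(2) by blast
  obtain sx where sx: "reduced_word n x sx" "subseq sx sy"
    using bruhat_le_subseq[OF assms(1) sy] by blast
  obtain sy' where sy': "reduced_word n y sy'" "subseq sy' sx"
    using bruhat_le_subseq[OF assms(2) sx(1)] by blast
  have "length sy \<le> length sx"
    using list_emb_length[OF sy'(2)] reduced_word_length[OF sy] reduced_word_length[OF sy'(1)]
    by simp
  then have "sx = sy"
    using sx(2) list_emb_length[OF sx(2)] subseq_same_length by fastforce
  then show ?thesis
    using reduced_word_word_perm[OF sx(1)] reduced_word_word_perm[OF sy] by simp
qed

lemma sigma_bruhat_le_iff: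
  assumes x: "reduced_word n x s"
  shows "bruhat_le n (sigma m) x \<longleftrightarrow> m \<in> set s"
proof
  assume "bruhat_le n (sigma m) x"
  then obtain r where r: "reduced_word n (sigma m) r" "subseq r s"
    using bruhat_le_subseq x by blast
  have "m \<in> set r"
    using letter_mem_word reduced_word_word_perm[OF r(1)] .
  then show "m \<in> set s"
    using set_mono_subseq[OF r(2)] by blast
next
  assume m: "m \<in> set s"
  then have "m \<in> {1..<n}"
    using reduced_word_is_word[OF x] by (auto simp: is_word_def)
  then have "reduced_word n (sigma m) [m]"
    by (rule reduced_word_sigma)
  moreover have "subseq [m] s"
    using m by (simp add: subseq_singleton_left)
  ultimately show "bruhat_le n (sigma m) x"
    using x unfolding bruhat_le_def by blast
qed

lemma supp_eq_set:
  assumes "reduced_word n x s"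
  shows "supp n x = set s"
proof -
  have "m \<in> set s \<longleftrightarrow> m \<in> set s'" if "reduced_word n x s'" for m s'
    using sigma_bruhat_le_iff[OF assms] sigma_bruhat_le_iff[OF that] by simp
  then show ?thesis
    using assms unfolding supp_def by blast
qed

lemma sigma_bruhat_le_iff_supp:
  assumes "x permutes {1..n}"
  shows "bruhat_le n (sigma m) x \<longleftrightarrow> m \<in> supp n x"
proof -
  obtain s where "reduced_word n x s"
    using reduced_word_exists[OF assms] ..
  then show ?thesis
    using supp_eq_set sigma_bruhat_le_iff by blast
qed

lemma supp_mono:
  assumes "bruhat_le n u w"
  shows "supp n u \<subseteq> supp n w"
proof
  fix m
  assume "m \<in> supp n u"
  then have "bruhat_le n (sigma m) w"
    using sigma_bruhat_le_iff_supp[OF bruhat_le_permutes_lower[OF assms]] bruhat_le_trans assms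
    by blast
  then show "m \<in> supp n w"
    using sigma_bruhat_le_iff_supp[OF bruhat_le_permutes_upper[OF assms]] by blast
qed

lemma sigma_neq_id: "sigma k \<noteq> id"
proof
  assume "sigma k = id"
  then have "sigma k k = k"
    by simp
  then show False
    by (simp add: sigma_apply)
qed

lemma mem_bruhat_ideal: "x \<in> bruhat_ideal n w \<longleftrightarrow> bruhat_le n x w"
  unfolding bruhat_ideal_def using bruhat_le_permutes_lower by blast

lemma id_bruhat_le_ideal: "x \<in> bruhat_ideal n w \<Longrightarrow> bruhat_le n id x"
  by (simp add: bruhat_ideal_def id_bruhat_le)

lemma bruhat_le_refl_ideal: "x \<in> bruhat_ideal n w \<Longrightarrow> bruhat_le n x x"
  by (simp add: bruhat_ideal_def bruhat_le_refl)

lemma finite_bruhat_ideal: "finite (bruhat_ideal n w)"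
  by (rule finite_subset[of _ "{p. p permutes {1..n}}"])
    (auto simp: bruhat_ideal_def finite_permutations)

lemma bruhat_ideal_eq:
  "bruhat_le n x w \<Longrightarrow> bruhat_ideal n x = {z \<in> bruhat_ideal n w. bruhat_le n z x}"
  using bruhat_le_trans by (auto simp: mem_bruhat_ideal)

lemma supp_eq_Int_if_bruhat_ideal_eq_Int:
  assumes "bruhat_ideal n u = bruhat_ideal n x \<inter> bruhat_ideal n y"
    and "u permutes {1..n}" "x permutes {1..n}" "y permutes {1..n}"
  shows "supp n u = supp n x \<inter> supp n y"
proof -
  have "m \<in> supp n u \<longleftrightarrow> sigma m \<in> bruhat_ideal n u" for m
    using sigma_bruhat_le_iff_supp[OF assms(2)] by (simp add: mem_bruhat_ideal)
  moreover have "sigma m \<in> bruhat_ideal n x \<longleftrightarrow> m \<in> supp n x"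
    and "sigma m \<in> bruhat_ideal n y \<longleftrightarrow> m \<in> supp n y" for m
    using sigma_bruhat_le_iff_supp[OF assms(3)] sigma_bruhat_le_iff_supp[OF assms(4)]
    by (simp_all add: mem_bruhat_ideal)
  ultimately show ?thesis
    using assms(1) by blast
qed

section \<open>Splittings of \<open>B(w)\<close> as \<open>2 \<times> B(v)\<close>\<close>

definition order_iso ::
    "('a \<Rightarrow> 'a \<Rightarrow> bool) \<Rightarrow> 'a set \<Rightarrow> ('b \<Rightarrow> 'b \<Rightarrow> bool) \<Rightarrow> 'b set \<Rightarrow> ('a \<Rightarrow> 'b) \<Rightarrow> bool" where
  "order_iso r A s B h \<longleftrightarrow> bij_betw h A B \<and> (\<forall>x\<in>A. \<forall>y\<in>A. r x y \<longleftrightarrow> s (h x) (h y))"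

definition two_times :: "('a \<Rightarrow> 'a \<Rightarrow> bool) \<Rightarrow> bool \<times> 'a \<Rightarrow> bool \<times> 'a \<Rightarrow> bool" where
  "two_times r p q \<longleftrightarrow> fst p \<le> fst q \<and> r (snd p) (snd q)"

lemma iso_two_times_iff:
  "iso_two_times n w v \<longleftrightarrow> (\<exists>f. order_iso (bruhat_le n) (bruhat_ideal n w)
     (two_times (bruhat_le n)) (UNIV \<times> bruhat_ideal n v) f)"
  by (simp add: iso_two_times_def order_iso_def two_times_def)

lemma order_iso_comp:
  assumes "order_iso r A s B h" "order_iso s B t C h'"
  shows "order_iso r A t C (h' \<circ> h)"
proof -
  have "h ` A = B"
    using assms(1) by (simp add: order_iso_def bij_betw_def)
  then show ?thesis
    using assms by (auto simp: order_iso_def intro: bij_betw_trans)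
qed

lemma order_iso_inv:
  assumes "order_iso r A s B h"
  shows "order_iso s B r A (the_inv_into A h)"
proof -
  have bij: "bij_betw h A B" and le: "\<forall>x\<in>A. \<forall>y\<in>A. r x y \<longleftrightarrow> s (h x) (h y)"
    using assms by (auto simp: order_iso_def)
  have "the_inv_into A h y \<in> A" "h (the_inv_into A h y) = y" if "y \<in> B" for y
    using that bij by (auto simp: bij_betw_def the_inv_into_into f_the_inv_into_f)
  then show ?thesis
    using bij le bij_betw_the_inv_into unfolding order_iso_def by metis
qed

lemma order_iso_restrict:
  "order_iso r A s B h \<Longrightarrow> C \<subseteq> A \<Longrightarrow> order_iso r C s (h ` C) h"
  unfolding order_iso_def bij_betw_def by (auto intro: inj_on_subset)

lemma order_iso_image_down:
  assumes "order_iso r A s B h" "x \<in> A"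
  shows "h ` {z \<in> A. r z x} = {y \<in> B. s y (h x)}"
  using assms unfolding order_iso_def bij_betw_def by auto

lemma order_iso_two_times_layer:
  assumes "order_iso r A (two_times s) (UNIV \<times> B) h"
  shows "order_iso r {x \<in> A. fst (h x) = b} s B (snd \<circ> h)"
proof -
  have bij: "bij_betw h A (UNIV \<times> B)" and le: "\<forall>x\<in>A. \<forall>y\<in>A. r x y \<longleftrightarrow> two_times s (h x) (h y)"
    using assms by (auto simp: order_iso_def)
  have "inj_on (snd \<circ> h) {x \<in> A. fst (h x) = b}"
    using bij_betw_imp_inj_on[OF bij] by (auto simp: inj_on_def prod_eq_iff)
  moreover have "z \<in> (snd \<circ> h) ` {x \<in> A. fst (h x) = b}" if "z \<in> B" for z
  proof -
    have "(b, z) \<in> h ` A"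
      using that bij_betw_imp_surj_on[OF bij] by simp
    then obtain x where x: "x \<in> A" "(b, z) = h x"
      by (rule imageE)
    then have "fst (h x) = b" "snd (h x) = z"
      by (metis fst_conv, metis snd_conv)
    then show ?thesis
      using x(1) by force
  qed
  moreover have "(snd \<circ> h) ` {x \<in> A. fst (h x) = b} \<subseteq> B"
    using bij_betw_apply[OF bij] by (auto simp: mem_Times_iff)
  ultimately show ?thesis
    using le by (auto simp: order_iso_def bij_betw_def two_times_def)
qed

lemma order_iso_two_times_map:
  assumes "order_iso r A s B h"
  shows "order_iso (two_times r) (UNIV \<times> A) (two_times s) (UNIV \<times> B) (map_prod id h)"
proof -
  have "bij_betw (map_prod id h) (UNIV \<times> A) (UNIV \<times> B)"
    using assms bij_betw_id by (auto simp: order_iso_def intro: bij_betw_map_prod)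
  then show ?thesis
    using assms by (auto simp: order_iso_def two_times_def)
qed

lemma order_iso_bruhat_ideal_restrict:
  assumes h: "order_iso (bruhat_le n) (bruhat_ideal n a) (bruhat_le n) (bruhat_ideal n b) h"
    and x: "x \<in> bruhat_ideal n a"
  shows "order_iso (bruhat_le n) (bruhat_ideal n x) (bruhat_le n) (bruhat_ideal n (h x)) h"
proof -
  have "h x \<in> bruhat_ideal n b"
    using h x by (auto simp: order_iso_def dest: bij_betw_apply)
  then have "h ` bruhat_ideal n x = bruhat_ideal n (h x)"
    using order_iso_image_down[OF h x] x bruhat_ideal_eq by (simp add: mem_bruhat_ideal)
  moreover have "bruhat_ideal n x \<subseteq> bruhat_ideal n a"
    using x bruhat_ideal_eq[of n x a] by (auto simp: mem_bruhat_ideal)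
  ultimately show ?thesis
    using order_iso_restrict[OF h] by metis
qed

text \<open>The lower and upper copy of \<open>B(v)\<close> in \<open>B(w)\<close> are the preimages under \<open>f\<close> of
  \<open>{False} \<times> B(v)\<close> and \<open>{True} \<times> B(v)\<close>.\<close>
locale bruhat_split =
  fixes n :: nat and w v :: "nat \<Rightarrow> nat" and f :: "(nat \<Rightarrow> nat) \<Rightarrow> bool \<times> (nat \<Rightarrow> nat)"
  assumes below: "bruhat_le n v w"
    and split: "order_iso (bruhat_le n) (bruhat_ideal n w) (two_times (bruhat_le n))
      (UNIV \<times> bruhat_ideal n v) f"
begin

definition g :: "bool \<times> (nat \<Rightarrow> nat) \<Rightarrow> nat \<Rightarrow> nat" where
  "g = the_inv_into (bruhat_ideal n w) f"

lemma f_bij: "bij_betw f (bruhat_ideal n w) (UNIV \<times> bruhat_ideal n v)"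
  using split by (simp add: order_iso_def)

lemma le_iff:
  "x \<in> bruhat_ideal n w \<Longrightarrow> y \<in> bruhat_ideal n w \<Longrightarrow>
    bruhat_le n x y \<longleftrightarrow> fst (f x) \<le> fst (f y) \<and> bruhat_le n (snd (f x)) (snd (f y))"
  using split by (simp add: order_iso_def two_times_def)

lemma snd_f_in: "x \<in> bruhat_ideal n w \<Longrightarrow> snd (f x) \<in> bruhat_ideal n v"
  using bij_betw_apply[OF f_bij] by (auto simp: mem_Times_iff)

lemma g_in: "z \<in> bruhat_ideal n v \<Longrightarrow> g (b, z) \<in> bruhat_ideal n w"
  unfolding g_def using f_bij by (simp add: bij_betw_def the_inv_into_into)

lemma f_g: "z \<in> bruhat_ideal n v \<Longrightarrow> f (g (b, z)) = (b, z)"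
  unfolding g_def using f_bij by (simp add: bij_betw_def f_the_inv_into_f)

lemma f_inj: "x \<in> bruhat_ideal n w \<Longrightarrow> y \<in> bruhat_ideal n w \<Longrightarrow> f x = f y \<Longrightarrow> x = y"
  using f_bij by (auto simp: bij_betw_def dest: inj_onD)

lemma id_le_snd_f: "x \<in> bruhat_ideal n w \<Longrightarrow> bruhat_le n id (snd (f x))"
  using snd_f_in id_bruhat_le_ideal by blast

lemma id_in_ideal_w: "id \<in> bruhat_ideal n w"
  using id_bruhat_le bruhat_le_permutes_upper below by (simp add: mem_bruhat_ideal)

lemma id_in_ideal_v: "id \<in> bruhat_ideal n v"
  using id_bruhat_le bruhat_le_permutes_lower below by (simp add: mem_bruhat_ideal)

lemma f_id: "f id = (False, id)"
proof -
  have "bruhat_le n id (g (False, id))"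
    using g_in[OF id_in_ideal_v] by (rule id_bruhat_le_ideal)
  then have "\<not> fst (f id)" "bruhat_le n (snd (f id)) id"
    using le_iff[OF id_in_ideal_w g_in[OF id_in_ideal_v]] f_g[OF id_in_ideal_v] by simp_all
  then show ?thesis
    using bruhat_le_antisym id_le_snd_f[OF id_in_ideal_w] by (metis prod.collapse)
qed

text \<open>\<open>sigma k\<close> is the preimage of the atom \<open>(True, id)\<close> of \<open>2 \<times> B(v)\<close>.\<close>
lemma split_atom:
  obtains k where "bruhat_le n (sigma k) w"
    and "\<And>x. x \<in> bruhat_ideal n w \<Longrightarrow> fst (f x) \<longleftrightarrow> bruhat_le n (sigma k) x"
proof -
  define a where "a = g (True, id)"
  have a_w: "a \<in> bruhat_ideal n w" and f_a: "f a = (True, id)"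
    using g_in[OF id_in_ideal_v] f_g[OF id_in_ideal_v] by (simp_all add: a_def)
  then obtain r where r: "reduced_word n a r"
    using reduced_word_exists bruhat_le_permutes_lower by (metis mem_bruhat_ideal)
  have "a \<noteq> id"
    using f_a f_id by auto
  then obtain k where "k \<in> set r"
    using r reduced_word_word_perm by (cases r) fastforce+
  then have k_a: "bruhat_le n (sigma k) a"
    using sigma_bruhat_le_iff[OF r] by blast
  then have k_w: "sigma k \<in> bruhat_ideal n w"
    using a_w bruhat_le_trans by (simp add: mem_bruhat_ideal)
  have "bruhat_le n (snd (f (sigma k))) id"
    using le_iff[OF k_w a_w] k_a f_a by simp
  then have snd_k: "snd (f (sigma k)) = id"
    using bruhat_le_antisym id_le_snd_f[OF k_w] by blast
  have "fst (f (sigma k))"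
  proof (rule ccontr)
    assume "\<not> fst (f (sigma k))"
    then have "f (sigma k) = f id"
      using snd_k f_id by (simp add: prod_eq_iff)
    then show False
      using f_inj[OF k_w id_in_ideal_w] sigma_neq_id by blast
  qed
  then have "fst (f x) \<longleftrightarrow> bruhat_le n (sigma k) x" if "x \<in> bruhat_ideal n w" for x
    using le_iff[OF k_w that] snd_k id_le_snd_f[OF that] by simp
  then show thesis
    using that k_w by (simp add: mem_bruhat_ideal)
qed

text \<open>Dropping an element of the upper copy of \<open>B(v)\<close> to the lower copy moves it down.\<close>
lemma card_upper_le_lower:
  assumes t: "t \<in> bruhat_ideal n w"
  shows "card {x \<in> bruhat_ideal n t. fst (f x)} \<le> card {x \<in> bruhat_ideal n t. \<not> fst (f x)}"
proof -
  define h where "h x = g (False, snd (f x))" for x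
  have ideal_t: "bruhat_ideal n t = {x \<in> bruhat_ideal n w. bruhat_le n x t}"
    using t bruhat_ideal_eq by (simp add: mem_bruhat_ideal)
  have h: "h x \<in> bruhat_ideal n w" "f (h x) = (False, snd (f x))" if "x \<in> bruhat_ideal n w" for x
    using g_in f_g snd_f_in[OF that] by (simp_all add: h_def)
  have "h x \<in> {x \<in> bruhat_ideal n t. \<not> fst (f x)}"
    if "x \<in> {x \<in> bruhat_ideal n t. fst (f x)}" for x
  proof -
    have x: "x \<in> bruhat_ideal n w" "bruhat_le n x t"
      using that ideal_t by auto
    have "bruhat_le n (h x) x"
      using le_iff[OF h(1)[OF x(1)] x(1)] h(2)[OF x(1)] bruhat_le_refl_ideal[OF snd_f_in[OF x(1)]] by simp
    then show ?thesis
      using h[OF x(1)] x(2) bruhat_le_trans ideal_t by auto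
  qed
  moreover have "inj_on h {x \<in> bruhat_ideal n t. fst (f x)}"
  proof (rule inj_onI)
    fix x y
    assume "x \<in> {x \<in> bruhat_ideal n t. fst (f x)}" "y \<in> {x \<in> bruhat_ideal n t. fst (f x)}"
      and "h x = h y"
    then have "x \<in> bruhat_ideal n w" "y \<in> bruhat_ideal n w" "f x = f y"
      using ideal_t h(2) by (auto simp: prod_eq_iff) (metis snd_conv)
    then show "x = y"
      by (rule f_inj)
  qed
  ultimately show ?thesis
    by (intro card_inj_on_le) (auto simp: finite_bruhat_ideal)
qed

lemma lower_copy:
  "bruhat_ideal n (g (False, v)) = {x \<in> bruhat_ideal n w. \<not> fst (f x)}"
proof -
  have v_v: "v \<in> bruhat_ideal n v"
    using bruhat_le_refl[OF bruhat_le_permutes_lower[OF below]] by (simp add: mem_bruhat_ideal)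
  then have v'_w: "g (False, v) \<in> bruhat_ideal n w"
    by (rule g_in)
  have "bruhat_ideal n (g (False, v)) = {x \<in> bruhat_ideal n w. bruhat_le n x (g (False, v))}"
    using bruhat_ideal_eq v'_w by (simp add: mem_bruhat_ideal)
  also have "\<dots> = {x \<in> bruhat_ideal n w. \<not> fst (f x)}"
    using le_iff[OF _ v'_w] f_g[OF v_v] snd_f_in by (auto simp: mem_bruhat_ideal)
  finally show ?thesis .
qed

lemma lower_copy_iso:
  "order_iso (bruhat_le n) (bruhat_ideal n (g (False, v))) (bruhat_le n) (bruhat_ideal n v) (snd \<circ> f)"
  using order_iso_two_times_layer[OF split, of False] lower_copy by simp

lemma upper_ideal_iso:
  assumes "f v = (True, y)"
  shows "order_iso (bruhat_le n) (bruhat_ideal n v) (two_times (bruhat_le n))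
    (UNIV \<times> bruhat_ideal n y) f"
proof -
  have v_w: "v \<in> bruhat_ideal n w"
    using below by (simp add: mem_bruhat_ideal)
  then have "y \<in> bruhat_ideal n v"
    using snd_f_in assms by fastforce
  then have "bruhat_ideal n y = {z \<in> bruhat_ideal n v. bruhat_le n z y}"
    using bruhat_ideal_eq by (simp add: mem_bruhat_ideal)
  then have "f ` {z \<in> bruhat_ideal n w. bruhat_le n z v} = UNIV \<times> bruhat_ideal n y"
    using order_iso_image_down[OF split v_w] assms by (auto simp: two_times_def)
  then show ?thesis
    using order_iso_restrict[OF split, of "bruhat_ideal n v"] bruhat_ideal_eq[OF below] by auto
qed

text \<open>If \<open>f v = (True, y)\<close>, the lower copy \<open>B(v')\<close> is \<open>B(v) \<cong> 2 \<times> B(y)\<close>, and \<open>B(y)\<close> is carried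
  back into the lower copy as some \<open>B(u)\<close>.\<close>
lemma split_descent:
  assumes v_upper: "fst (f v)"
  obtains v' u where "bruhat_ideal n v' = {x \<in> bruhat_ideal n w. \<not> fst (f x)}"
    and "bruhat_ideal n u = bruhat_ideal n v' \<inter> bruhat_ideal n v"
    and "iso_two_times n v' u"
proof -
  let ?B = "bruhat_ideal n" and ?le = "bruhat_le n"
  define v' where "v' = g (False, v)"
  define y where "y = snd (f v)"
  define \<phi> where "\<phi> = snd \<circ> f"
  define \<psi> where "\<psi> = the_inv_into (?B v') \<phi>"
  define u where "u = \<psi> y"
  have v_w: "v \<in> ?B w"
    using below by (simp add: mem_bruhat_ideal)
  have y_v: "y \<in> ?B v" and f_v: "f v = (True, y)"
    using snd_f_in[OF v_w] v_upper by (simp_all add: y_def prod_eq_iff)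
  have \<phi>: "order_iso ?le (?B v') ?le (?B v) \<phi>"
    using lower_copy_iso by (simp add: \<phi>_def v'_def)
  have \<psi>: "order_iso ?le (?B v) ?le (?B v') \<psi>"
    using order_iso_inv[OF \<phi>] by (simp add: \<psi>_def)
  have u_v': "u \<in> ?B v'" and "\<phi> u = y"
    using \<phi> y_v unfolding u_def \<psi>_def order_iso_def bij_betw_def
    by (simp_all add: the_inv_into_into f_the_inv_into_f)
  then have u_w: "u \<in> ?B w" and f_u: "f u = (False, y)"
    using lower_copy by (auto simp: v'_def \<phi>_def prod_eq_iff)
  have "order_iso ?le (?B v') (two_times ?le) (UNIV \<times> ?B u) (map_prod id \<psi> \<circ> (f \<circ> \<phi>))"
    using order_iso_comp[OF order_iso_comp[OF \<phi> upper_ideal_iso[OF f_v]]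
        order_iso_two_times_map[OF order_iso_bruhat_ideal_restrict[OF \<psi> y_v]]]
    by (simp add: u_def)
  then have "iso_two_times n v' u"
    unfolding iso_two_times_iff by blast
  moreover have "?B u = ?B v' \<inter> ?B v"
  proof -
    have "?le x u \<longleftrightarrow> \<not> fst (f x) \<and> ?le x v" if "x \<in> ?B w" for x
      using le_iff[OF that u_w] le_iff[OF that v_w] f_u f_v by simp
    then show ?thesis
      using bruhat_ideal_eq[of n u w] bruhat_ideal_eq[OF below] lower_copy u_w
      by (auto simp: mem_bruhat_ideal v'_def)
  qed
  ultimately show thesis
    using that lower_copy by (simp add: v'_def)
qed

end

section \<open>Braid elements and confined letters\<close>

definition adjacent :: "nat \<Rightarrow> nat \<Rightarrow> bool" where
  "adjacent x y \<longleftrightarrow> y = Suc x \<or> x = Suc y"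

lemma adjacent_sym: "adjacent x y \<Longrightarrow> adjacent y x"
  by (auto simp: adjacent_def)

lemma word_perm_braid: "adjacent x y \<Longrightarrow> word_perm [x, y, x] = word_perm [y, x, y]"
  by (auto simp: adjacent_def fun_eq_iff sigma_apply)

lemma reduced_word_adjacent_pair:
  assumes "adjacent x y" "x \<in> {1..<n}" "y \<in> {1..<n}"
  shows "reduced_word n (word_perm [x, y]) [x, y]"
proof -
  have "sigma x y < sigma x (Suc y)"
    using assms(1) by (auto simp: adjacent_def sigma_apply)
  then show ?thesis
    using reduced_word_snocI[OF reduced_word_sigma[OF assms(2)] assms(3)] by simp
qed

lemma reduced_word_braid:
  assumes "adjacent x y" "x \<in> {1..<n}" "y \<in> {1..<n}"
  shows "reduced_word n (word_perm [x, y, x]) [x, y, x]"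
proof -
  have "(sigma x \<circ> sigma y) x < (sigma x \<circ> sigma y) (Suc x)"
    using assms(1) by (auto simp: adjacent_def sigma_apply)
  then show ?thesis
    using reduced_word_snocI[OF reduced_word_adjacent_pair[OF assms] assms(2)]
    by (simp add: comp_assoc)
qed

lemma braid_ideal_not_above_subset:
  assumes xy: "adjacent x y" "x \<in> {1..<n}" "y \<in> {1..<n}"
  shows "{u \<in> bruhat_ideal n (word_perm [x, y, x]). \<not> bruhat_le n (sigma x) u} \<subseteq> {id, sigma y}"
proof
  fix u
  assume u: "u \<in> {u \<in> bruhat_ideal n (word_perm [x, y, x]). \<not> bruhat_le n (sigma x) u}"
  then have "bruhat_le n u (word_perm [x, y, x])"
    by (simp add: mem_bruhat_ideal)
  then obtain r where r: "reduced_word n u r" "subseq r [x, y, x]"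
    using bruhat_le_subseq reduced_word_braid[OF xy] by blast
  have "x \<noteq> y"
    using xy(1) by (auto simp: adjacent_def)
  have "x \<notin> set r"
    using u sigma_bruhat_le_iff[OF r(1)] by blast
  then have "filter (\<lambda>a. a \<noteq> x) r = r"
    by (auto simp: filter_id_conv)
  then have "subseq r [y]"
    using subseq_filter[OF r(2), of "\<lambda>a. a \<noteq> x"] \<open>x \<noteq> y\<close> by simp
  then have "r = [] \<or> r = [y]"
    by (rule subseq_singleton_right)
  then show "u \<in> {id, sigma y}"
    using reduced_word_word_perm[OF r(1)] by auto
qed

lemma card_braid_ideal_elements:
  assumes xy: "adjacent x y" "x \<in> {1..<n}" "y \<in> {1..<n}"
  shows "card {sigma x, word_perm [x, y], word_perm [y, x], word_perm [x, y, x]} = 4"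
proof -
  have "word_perm [x, y] \<noteq> word_perm [y, x]"
  proof
    assume "word_perm [x, y] = word_perm [y, x]"
    then have "sigma x (sigma y x) = sigma y (sigma x x)"
      by (simp add: fun_eq_iff)
    then show False
      using xy(1) by (auto simp: adjacent_def sigma_apply)
  qed
  moreover have "perm_length n (sigma x) = 1" "perm_length n (word_perm [x, y]) = 2"
    "perm_length n (word_perm [y, x]) = 2" "perm_length n (word_perm [x, y, x]) = 3"
    using reduced_word_length[OF reduced_word_sigma[OF xy(2)]]
      reduced_word_length[OF reduced_word_adjacent_pair[OF xy]]
      reduced_word_length[OF reduced_word_adjacent_pair[OF adjacent_sym[OF xy(1)] xy(3,2)]]
      reduced_word_length[OF reduced_word_braid[OF xy]]
    by simp_all
  then have "sigma x \<noteq> word_perm [x, y]" "sigma x \<noteq> word_perm [y, x]"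
    "sigma x \<noteq> word_perm [x, y, x]" "word_perm [x, y] \<noteq> word_perm [x, y, x]"
    "word_perm [y, x] \<noteq> word_perm [x, y, x]"
    by auto
  ultimately show ?thesis
    by simp
qed

lemma braid_ideal_card_above:
  assumes xy: "adjacent x y" "x \<in> {1..<n}" "y \<in> {1..<n}"
  defines "t \<equiv> word_perm [x, y, x]"
  shows "4 \<le> card {u \<in> bruhat_ideal n t. bruhat_le n (sigma x) u}"
proof -
  let ?upper = "{u \<in> bruhat_ideal n t. bruhat_le n (sigma x) u}"
  have red_t: "reduced_word n t [x, y, x]"
    unfolding t_def using reduced_word_braid[OF xy] .
  have upper: "p \<in> ?upper" if "reduced_word n p r" "subseq r [x, y, x]" "x \<in> set r" for p r
  proof -
    have "bruhat_le n p t"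
      using that(1,2) red_t unfolding bruhat_le_def by blast
    moreover have "bruhat_le n (sigma x) p"
      using sigma_bruhat_le_iff[OF that(1)] that(3) by blast
    ultimately show ?thesis
      by (simp add: mem_bruhat_ideal)
  qed
  define a b where "a = word_perm [x, y]" and "b = word_perm [y, x]"
  have red_x: "reduced_word n (sigma x) [x]" and red_a: "reduced_word n a [x, y]"
    and red_b: "reduced_word n b [y, x]"
    using reduced_word_sigma[OF xy(2)] reduced_word_adjacent_pair[OF xy]
      reduced_word_adjacent_pair[OF adjacent_sym[OF xy(1)] xy(3,2)] by (simp_all add: a_def b_def)
  have "x \<noteq> y"
    using xy(1) by (auto simp: adjacent_def)
  then have "{sigma x, a, b, t} \<subseteq> ?upper"
    using upper[OF red_x] upper[OF red_a] upper[OF red_b] upper[OF red_t] by simp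
  moreover have "card {sigma x, a, b, t} = 4"
    using card_braid_ideal_elements[OF xy] by (simp add: a_def b_def t_def)
  moreover have "finite ?upper"
    by (rule finite_subset[OF _ finite_bruhat_ideal]) blast
  ultimately show ?thesis
    using card_mono by metis
qed

text \<open>So no splitting of an ideal containing \<open>x y x\<close> has \<open>sigma x\<close> as its atom
  (compare \<open>card_upper_le_lower\<close>).\<close>
lemma braid_ideal_card_not_above_less:
  assumes xy: "adjacent x y" "x \<in> {1..<n}" "y \<in> {1..<n}"
  defines "t \<equiv> word_perm [x, y, x]"
  shows "card {u \<in> bruhat_ideal n t. \<not> bruhat_le n (sigma x) u}
    < card {u \<in> bruhat_ideal n t. bruhat_le n (sigma x) u}"
proof -
  have "card {id, sigma y} \<le> 2"
    by (simp add: card_insert_if)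
  then have "card {u \<in> bruhat_ideal n t. \<not> bruhat_le n (sigma x) u} \<le> 2"
    using card_mono[OF _ braid_ideal_not_above_subset[OF xy]] by (simp add: t_def)
  then show ?thesis
    using braid_ideal_card_above[OF xy] by (simp add: t_def)
qed

context bruhat_split
begin

lemma braid_in_lower_copy:
  assumes ij: "adjacent i j" "i \<in> {1..<n}" "j \<in> {1..<n}"
    and t_w: "bruhat_le n (word_perm [i, j, i]) w"
  shows "\<not> fst (f (word_perm [i, j, i]))"
proof
  let ?B = "bruhat_ideal n"
  define t where "t = word_perm [i, j, i]"
  assume "fst (f (word_perm [i, j, i]))"
  then have "fst (f t)"
    by (simp add: t_def)
  obtain k where layer: "\<And>x. x \<in> ?B w \<Longrightarrow> fst (f x) \<longleftrightarrow> bruhat_le n (sigma k) x"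
    using split_atom by blast
  have t_w: "t \<in> ?B w"
    using t_w by (simp add: t_def mem_bruhat_ideal)
  then have "bruhat_le n (sigma k) t"
    using layer \<open>fst (f t)\<close> by blast
  then have "k \<in> {i, j}"
    unfolding sigma_bruhat_le_iff[OF reduced_word_braid[OF ij]] t_def by auto
  then obtain y where y: "adjacent k y" "k \<in> {1..<n}" "y \<in> {1..<n}" "t = word_perm [k, y, k]"
    using ij word_perm_braid[OF ij(1)] adjacent_sym t_def by auto
  have "?B t \<subseteq> ?B w"
    using bruhat_ideal_eq t_w by (auto simp: mem_bruhat_ideal)
  then have "{x \<in> ?B t. fst (f x)} = {x \<in> ?B t. bruhat_le n (sigma k) x}"
    "{x \<in> ?B t. \<not> fst (f x)} = {x \<in> ?B t. \<not> bruhat_le n (sigma k) x}"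
    using layer by blast+
  then show False
    using card_upper_le_lower[OF t_w] braid_ideal_card_not_above_less[OF y(1-3)] y(4) by simp
qed

lemma upper_copy_contains_v:
  assumes supp_w: "supp n w - {i} \<subseteq> supp n v"
    and i_w: "sigma i \<in> bruhat_ideal n w" and i_lower: "\<not> fst (f (sigma i))"
  shows "fst (f v)"
proof -
  obtain k where k_w: "bruhat_le n (sigma k) w"
    and layer: "\<And>x. x \<in> bruhat_ideal n w \<Longrightarrow> fst (f x) \<longleftrightarrow> bruhat_le n (sigma k) x"
    using split_atom by blast
  have "k \<noteq> i"
    using layer[OF i_w] i_lower bruhat_le_refl_ideal[OF i_w] by blast
  moreover have "k \<in> supp n w"
    using k_w sigma_bruhat_le_iff_supp bruhat_le_permutes_upper by blast
  ultimately have "bruhat_le n (sigma k) v"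
    using supp_w sigma_bruhat_le_iff_supp[OF bruhat_le_permutes_lower[OF below]] by blast
  then show ?thesis
    using layer below by (simp add: mem_bruhat_ideal)
qed

lemma split_descent_supp:
  assumes v_upper: "fst (f v)" and t_w: "t \<in> bruhat_ideal n w" and t_lower: "\<not> fst (f t)"
    and i_v: "i \<notin> supp n v" and supp_w: "supp n w - {i} \<subseteq> supp n v"
  obtains v' u where "card (bruhat_ideal n v') < card (bruhat_ideal n w)" "bruhat_le n t v'"
    "bruhat_le n u v'" "i \<notin> supp n u" "supp n v' - {i} \<subseteq> supp n u" "iso_two_times n v' u"
proof -
  let ?B = "bruhat_ideal n"
  obtain v' u where lower: "?B v' = {x \<in> ?B w. \<not> fst (f x)}"
    and B_u: "?B u = ?B v' \<inter> ?B v" and iso: "iso_two_times n v' u"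
    using split_descent[OF v_upper] by blast
  have "t \<in> ?B v'"
    using lower t_w t_lower by blast
  then have t_v': "bruhat_le n t v'"
    by (simp add: mem_bruhat_ideal)
  have "card (?B v') < card (?B w)"
  proof (rule psubset_card_mono[OF finite_bruhat_ideal])
    have "v \<in> ?B w"
      using below by (simp add: mem_bruhat_ideal)
    then show "?B v' \<subset> ?B w"
      using lower v_upper by blast
  qed
  have "id \<in> ?B v'"
    using lower id_in_ideal_w f_id by simp
  then have "id \<in> ?B u"
    using B_u id_in_ideal_v by blast
  then have "u \<in> ?B u"
    using bruhat_le_refl[OF bruhat_le_permutes_upper] by (simp add: mem_bruhat_ideal)
  then have u_v': "bruhat_le n u v'"
    using B_u by (simp add: mem_bruhat_ideal)
  have "supp n u = supp n v' \<inter> supp n v"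
    using supp_eq_Int_if_bruhat_ideal_eq_Int[OF B_u] bruhat_le_permutes_lower[OF u_v']
      bruhat_le_permutes_upper[OF t_v'] bruhat_le_permutes_lower[OF below] by blast
  moreover have "v' \<in> ?B v'"
    using bruhat_le_refl[OF bruhat_le_permutes_upper[OF t_v']] by (simp add: mem_bruhat_ideal)
  then have "supp n v' \<subseteq> supp n w"
    using lower supp_mono by (simp add: mem_bruhat_ideal)
  ultimately have "i \<notin> supp n u" "supp n v' - {i} \<subseteq> supp n u"
    using i_v supp_w by blast+
  then show thesis
    using that \<open>card (?B v') < card (?B w)\<close> t_v' u_v' iso by blast
qed

end

lemma braid_not_bruhat_le_of_split:
  assumes ij: "adjacent i j" "i \<in> {1..<n}" "j \<in> {1..<n}"
  shows "bruhat_le n v w \<Longrightarrow> i \<notin> supp n v \<Longrightarrow> supp n w - {i} \<subseteq> supp n v \<Longrightarrow>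
    iso_two_times n w v \<Longrightarrow> \<not> bruhat_le n (word_perm [i, j, i]) w"
proof (induction "card (bruhat_ideal n w)" arbitrary: w v rule: less_induct)
  case less
  define t where "t = word_perm [i, j, i]"
  show "\<not> bruhat_le n t w"
  proof
    assume t_w: "bruhat_le n t w"
    obtain f where "bruhat_split n w v f"
      using less.prems(1,4) unfolding iso_two_times_iff bruhat_split_def by blast
    then interpret bruhat_split n w v f .
    have t_lower: "\<not> fst (f t)" and t_in: "t \<in> bruhat_ideal n w"
      using braid_in_lower_copy[OF ij] t_w by (simp_all add: t_def mem_bruhat_ideal)
    have i_t: "bruhat_le n (sigma i) t"
      using sigma_bruhat_le_iff[OF reduced_word_braid[OF ij]] by (simp add: t_def)
    then have i_w: "sigma i \<in> bruhat_ideal n w"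
      using bruhat_le_trans t_w by (simp add: mem_bruhat_ideal)
    then have "\<not> fst (f (sigma i))"
      using le_iff[OF i_w t_in] i_t t_lower by auto
    then have "fst (f v)"
      using upper_copy_contains_v[OF less.prems(3) i_w] by blast
    then obtain v' u where "card (bruhat_ideal n v') < card (bruhat_ideal n w)" "bruhat_le n t v'"
      "bruhat_le n u v'" "i \<notin> supp n u" "supp n v' - {i} \<subseteq> supp n u" "iso_two_times n v' u"
      by (rule split_descent_supp[OF _ t_in t_lower less.prems(2,3)])
    then show False
      using less.hyps by (simp add: t_def)
  qed
qed

lemma count_list_ge_2_split:
  assumes "2 \<le> count_list xs x"
  obtains a b c where "xs = a @ x # b @ x # c" and "x \<notin> set b"
proof -
  have "x \<in> set xs"
    using assms by (metis count_notin not_numeral_le_zero)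
  then obtain a r where xs: "xs = a @ x # r" and "x \<notin> set a"
    using split_list_first[of x xs] by blast
  then have "count_list r x \<noteq> 0"
    using assms count_list_0_iff[of a x] by simp
  then have "x \<in> set r"
    by (metis count_notin)
  then obtain b c where "r = b @ x # c" "x \<notin> set b"
    using split_list_first[of x r] by blast
  then show thesis
    using that[of a b c] xs by simp
qed

lemma subseq_three: "x \<in> set a \<Longrightarrow> z \<in> set c \<Longrightarrow> subseq [x, y, z] (a @ y # c)"
  using list_emb_append_mono[of "(=)" "[x]" a "[y, z]" "y # c"]
  by (simp add: subseq_singleton_left)

lemma reduced_word_repeat_adjacent:
  assumes red: "reduced_word n w (a @ i # b @ i # c)" and "i \<notin> set b"
  shows "\<exists>m\<in>set b. adjacent i m"
proof (rule ccontr)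
  assume no_adj: "\<not> ?thesis"
  have "Suc i < m \<or> Suc m < i" if "m \<in> set b" for m
  proof -
    have "m \<noteq> i" "m \<noteq> Suc i" "i \<noteq> Suc m"
      using that no_adj \<open>i \<notin> set b\<close> by (auto simp: adjacent_def)
    then show ?thesis
      by linarith
  qed
  then have comm: "sigma i \<circ> word_perm b = word_perm b \<circ> sigma i"
    by (intro sigma_commute_word_perm) blast
  have "sigma i (word_perm b x) = word_perm b (sigma i x)" for x
    using fun_cong[OF comm, of x] by (simp only: comp_apply)
  then have "word_perm (a @ b @ c) = w"
    using reduced_word_word_perm[OF red] by (simp add: fun_eq_iff)
  moreover have "is_word n (a @ b @ c)"
    using reduced_word_is_word[OF red] by simp
  ultimately have "length (a @ i # b @ i # c) \<le> length (a @ b @ c)"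
    using red unfolding reduced_word_def by blast
  then show False
    by simp
qed

lemma subseq_of_confined_once:
  assumes "count_list s i = 1" and "\<not> unconfined i s"
  obtains j where "adjacent i j" and "subseq [j, i, j] s"
proof -
  obtain p a b where pab: "p < length s" "s ! p = i" "a < p" "p < b" "b < length s"
    "s ! a = i + 1 \<and> s ! b = i + 1 \<or> 1 \<le> i \<and> s ! a = i - 1 \<and> s ! b = i - 1"
    using assms unfolding unconfined_def by blast
  have "take p s ! a \<in> set (take p s)"
    using pab by (intro nth_mem) simp
  then have "s ! a \<in> set (take p s)"
    using pab by simp
  have "drop (Suc p) s ! (b - Suc p) \<in> set (drop (Suc p) s)"
    using pab by (intro nth_mem) simp
  then have "s ! b \<in> set (drop (Suc p) s)"
    using pab by simp
  with \<open>s ! a \<in> set (take p s)\<close>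
  have "subseq [s ! a, i, s ! b] (take p s @ i # drop (Suc p) s)"
    by (rule subseq_three)
  moreover have "take p s @ i # drop (Suc p) s = s"
    using id_take_nth_drop[OF pab(1), symmetric] pab(2) by simp
  moreover have "s ! b = s ! a"
    using pab(6) by auto
  ultimately have "subseq [s ! a, i, s ! a] s"
    by simp
  moreover have "adjacent i (s ! a)"
    using pab(6) by (auto simp: adjacent_def)
  ultimately show thesis
    using that by blast
qed

lemma subseq_of_repeated_letter:
  assumes red: "reduced_word n w s" and "2 \<le> count_list s i"
  obtains j where "adjacent i j" and "subseq [i, j, i] s"
proof -
  obtain a b c where s: "s = a @ i # b @ i # c" and "i \<notin> set b"
    using assms(2) by (rule count_list_ge_2_split)
  then obtain m where m: "m \<in> set b" "adjacent i m"
    using reduced_word_repeat_adjacent red by blast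
  then obtain b1 b2 where "b = b1 @ m # b2"
    by (meson split_list)
  then have "subseq [i, m, i] ((a @ i # b1) @ m # (b2 @ i # c))"
    by (intro subseq_three) simp_all
  then have "subseq [i, m, i] s"
    using s \<open>b = b1 @ m # b2\<close> by simp
  then show thesis
    using that m(2) by blast
qed

lemma braid_bruhat_le_of_subseq:
  assumes red: "reduced_word n w s" and "adjacent x y" and sub: "subseq [x, y, x] s"
  shows "bruhat_le n (word_perm [x, y, x]) w"
proof -
  have "{x, y} \<subseteq> {1..<n}"
    using set_mono_subseq[OF sub] reduced_word_is_word[OF red] by (auto simp: is_word_def)
  then have "reduced_word n (word_perm [x, y, x]) [x, y, x]"
    using reduced_word_braid[OF \<open>adjacent x y\<close>] by simp
  then show ?thesis
    using red sub unfolding bruhat_le_def by blast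
qed

lemma braid_le_of_not_unconfined:
  assumes red: "reduced_word n w s" and i: "i \<in> set s" and "\<not> unconfined i s"
  obtains j where "j \<in> {1..<n}" "adjacent i j" "bruhat_le n (word_perm [i, j, i]) w"
proof -
  have "\<exists>j. adjacent i j \<and> (subseq [i, j, i] s \<or> subseq [j, i, j] s)"
  proof (cases "count_list s i = 1")
    case True
    then show ?thesis
      using subseq_of_confined_once[OF True assms(3)] by blast
  next
    case False
    then have "2 \<le> count_list s i"
      using i count_list_0_iff[of s i] by linarith
    then show ?thesis
      using subseq_of_repeated_letter[OF red] by blast
  qed
  then obtain j where j: "adjacent i j" and sub: "subseq [i, j, i] s \<or> subseq [j, i, j] s"
    by blast
  have "j \<in> set s"
    using sub set_mono_subseq by fastforce
  then have "j \<in> {1..<n}"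
    using reduced_word_is_word[OF red] by (auto simp: is_word_def)
  moreover have "bruhat_le n (word_perm [i, j, i]) w"
    using sub braid_bruhat_le_of_subseq[OF red j] braid_bruhat_le_of_subseq[OF red adjacent_sym[OF j]]
      word_perm_braid[OF j] by auto
  ultimately show thesis
    using that j by blast
qed

theorem proposition2p9:
  fixes n i :: nat and w v :: "nat \<Rightarrow> nat"
  assumes "w permutes {1..n}" and "v permutes {1..n}"
    and "bruhat_le n v w" and "v \<noteq> w"
    and "supp n v \<subset> supp n w"
    and "iso_two_times n w v"
    and "supp n w - supp n v = {i}"
  shows "\<forall>s. reduced_word n w s \<longrightarrow> unconfined i s"
proof (intro allI impI)
  fix s
  assume red: "reduced_word n w s"
  have i_s: "i \<in> set s" and i_v: "i \<notin> supp n v" and supp_w: "supp n w - {i} \<subseteq> supp n v"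
    using assms(7) supp_eq_set[OF red] by auto
  then have i_range: "i \<in> {1..<n}"
    using reduced_word_is_word[OF red] by (auto simp: is_word_def)
  show "unconfined i s"
  proof (rule ccontr)
    assume "\<not> unconfined i s"
    then obtain j where j: "j \<in> {1..<n}" "adjacent i j" "bruhat_le n (word_perm [i, j, i]) w"
      using braid_le_of_not_unconfined[OF red i_s] by blast
    then show False
      using braid_not_bruhat_le_of_split[OF j(2) i_range j(1) assms(3) i_v supp_w assms(6)] by blast
  qed
qed

end
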